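(* Let $K$ be a field of characteristic $0$, let $a\in K^*$ be a nonzero constant and let $P_t(x)\in K[t,x]$ be a polynomial of degree $4$ in $x$ and of even degree $d$ in $t$. Let $V\to\mathbb{P}^1\times\mathbb{P}^1$ be the associated Châtelet surface bundle (conic bundle) and $\mathrm{De}(V)\subset\mathbb{P}^1\times\mathbb{P}^1$ its degeneracy locus. Then the projective variety $V$ is smooth over $K$ if and only if $\mathrm{De}(V)$ is a smooth curve.
   Context: Let $\tilde P_{t,t'}(x,x')=x'^4t'^dP_{t/t'}(x/x')\in K[t,t',x,x']$ be the bihomogenisation of $P_t(x)$, and set $P^{\infty\infty}_t(x)=\tilde P_{t,1}(x,1)$, $P^{\infty0}_t(x')=\tilde P_{t,1}(1,x')$, $P^{0\infty}_{t'}(x)=\tilde P_{1,t'}(x,1)$, $P^{00}_{t'}(x')=\tilde P_{1,t'}(1,x')$. Cover $\mathbb{P}^1\times\mathbb{P}^1$ (coordinates $t$ or $t'=1/t$ on the first factor, $x$ or $x'=1/x$ on the second) by the four affine opens $\mathcal{U}_{\infty\infty},\mathcal{U}_{\infty0},\mathcal{U}_{0\infty},\mathcal{U}_{00}$ (complements of $\infty$ or $0$ in each factor). $V$ is obtained by gluing the hypersurfaces $Y^2-aZ^2=W_{\infty\infty}^2P^{\infty\infty}_t(x)$, $Y^2-aZ^2=W_{\infty0}^2P^{\infty0}_t(x')$, $Y^2-aZ^2=W_{0\infty}^2P^{0\infty}_{t'}(x)$, $Y^2-aZ^2=W_{00}^2P^{00}_{t'}(x')$ in $\mathcal{U}_{\bullet\bullet}\times\mathbb{P}^2$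 (coordinates $(Y:Z:W_{\bullet\bullet})$) via $t'=t^{-1}$, $x'=x^{-1}$, $W_{\infty\infty}=W_{\infty0}x'^2=W_{0\infty}t'^{d/2}=W_{00}x'^2t'^{d/2}$, $W_{\infty0}=W_{0\infty}x^2t'^{d/2}=W_{00}t'^{d/2}$, $W_{0\infty}=W_{00}x'^2$. It maps to $\mathbb{P}^1\times\mathbb{P}^1$, and composing with the first projection gives the Châtelet surface bundle $V\to\mathbb{P}^1$ with fibres $y^2-az^2=P_\theta(x)$. The degeneracy locus $\mathrm{De}(V)$ is the curve $\tilde P_{t,t'}(x,x')=0$ in $\mathbb{P}^1\times\mathbb{P}^1$. *)

theory Defs
  imports "HOL-Computational_Algebra.Polynomial"
begin

text \<open>A polynomial P_t(x) in K[t,x] with deg_x P = 4 and deg_t P = d is given by its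
coefficient function c, where c i j is the coefficient of t^i x^j.
The four affine charts of P1 x P1 are indexed by two booleans (ft, fx):
ft = False means the chart with coordinate t (complement of infinity), ft = True the chart
with coordinate t' = 1/t; similarly fx for x resp. x' = 1/x.
In chart (ft, fx) the (dehomogenised) polynomial is obtained from the bihomogenisation
x'^4 t'^d P_{t/t'}(x/x') by setting the appropriate coordinate to 1.\<close>

definition expo :: "nat \<Rightarrow> bool \<Rightarrow> nat \<Rightarrow> nat" where
  "expo n flip i = (if flip then n - i else i)"

definition chart_poly :: "(nat \<Rightarrow> nat \<Rightarrow> 'a::comm_ring_1) \<Rightarrow> nat \<Rightarrow> bool \<Rightarrow> bool \<Rightarrow> 'a \<Rightarrow> 'a \<Rightarrow> 'a" where
  "chart_poly c d ft fx u v =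
     (\<Sum>i\<le>d. \<Sum>j\<le>4. c i j * u ^ expo d ft i * v ^ expo 4 fx j)"

definition chart_poly_du :: "(nat \<Rightarrow> nat \<Rightarrow> 'a::comm_ring_1) \<Rightarrow> nat \<Rightarrow> bool \<Rightarrow> bool \<Rightarrow> 'a \<Rightarrow> 'a \<Rightarrow> 'a" where
  "chart_poly_du c d ft fx u v =
     (\<Sum>i\<le>d. \<Sum>j\<le>4. c i j * of_nat (expo d ft i) * u ^ (expo d ft i - 1) * v ^ expo 4 fx j)"

definition chart_poly_dv :: "(nat \<Rightarrow> nat \<Rightarrow> 'a::comm_ring_1) \<Rightarrow> nat \<Rightarrow> bool \<Rightarrow> bool \<Rightarrow> 'a \<Rightarrow> 'a \<Rightarrow> 'a" where
  "chart_poly_dv c d ft fx u v =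
     (\<Sum>i\<le>d. \<Sum>j\<le>4. c i j * u ^ expo d ft i * of_nat (expo 4 fx j) * v ^ (expo 4 fx j - 1))"

text \<open>The degeneracy locus De(V): the curve tilde P = 0 in P1 x P1, read over an
algebraically closed field L.\<close>
definition De_smooth :: "(nat \<Rightarrow> nat \<Rightarrow> 'a::comm_ring_1) \<Rightarrow> nat \<Rightarrow> bool" where
  "De_smooth c d = (\<forall>ft fx u v.
      \<not> (chart_poly c d ft fx u v = 0 \<and> chart_poly_du c d ft fx u v = 0
          \<and> chart_poly_dv c d ft fx u v = 0))"

text \<open>The Chatelet surface bundle V, covered by the four hypersurfaces
F = Y^2 - a Z^2 - W^2 P^{..}(u,v) = 0 in (chart of P1 x P1) x P2, coordinates (Y:Z:W).\<close>
definition V_smooth :: "'a::comm_ring_1 \<Rightarrow> (nat \<Rightarrow> nat \<Rightarrow> 'a) \<Rightarrow> nat \<Rightarrow> bool" where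
  "V_smooth a c d = (\<forall>ft fx u v Y Z W. (Y, Z, W) \<noteq> (0, 0, 0) \<longrightarrow>
      \<not> (Y^2 - a * Z^2 - W^2 * chart_poly c d ft fx u v = 0
         \<and> 2 * Y = 0
         \<and> - 2 * a * Z = 0
         \<and> - 2 * W * chart_poly c d ft fx u v = 0
         \<and> - (W^2 * chart_poly_du c d ft fx u v) = 0
         \<and> - (W^2 * chart_poly_dv c d ft fx u v) = 0))"

end

theory Submission
  imports Defs
begin

text \<open>Since 2 and a are invertible, the partial derivatives in Y and Z force Y = Z = 0 at a
singular point of V, hence W \<noteq> 0; the remaining equations then say exactly that the base
point is a singular point of the curve De(V). Conversely a singular point of De(V) lifts to
the singular point (0 : 0 : 1) of V above it.\<close>

lemma hom_nonzero:
  fixes \<phi> :: "'k::field \<Rightarrow> 'l::{mult_zero, zero_neq_one}"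
  assumes hom_mult: "\<And>x y. \<phi> (x * y) = \<phi> x * \<phi> y"
    and hom_one: "\<phi> 1 = 1"
    and "x \<noteq> 0"
  shows "\<phi> x \<noteq> 0"
proof
  assume "\<phi> x = 0"
  then have "\<phi> (x * inverse x) = 0" by (simp add: hom_mult)
  with \<open>x \<noteq> 0\<close> show False by (simp add: hom_one)
qed

lemma hom_two:
  fixes \<phi> :: "'k::semiring_1 \<Rightarrow> 'l::semiring_1"
  assumes hom_add: "\<And>x y. \<phi> (x + y) = \<phi> x + \<phi> y"
    and hom_one: "\<phi> 1 = 1"
  shows "\<phi> 2 = 2"
  using hom_add[of 1 1] by (simp add: hom_one one_add_one)

lemma V_smooth_iff_De_smooth:
  fixes a :: "'a::idom" and c :: "nat \<Rightarrow> nat \<Rightarrow> 'a"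
  assumes two_nz: "(2::'a) \<noteq> 0" and a_nz: "a \<noteq> 0"
  shows "V_smooth a c d \<longleftrightarrow> De_smooth c d"
proof
  assume V: "V_smooth a c d"
  show "De_smooth c d" unfolding De_smooth_def
  proof (intro allI notI)
    fix ft fx u v
    assume "chart_poly c d ft fx u v = 0 \<and> chart_poly_du c d ft fx u v = 0
      \<and> chart_poly_dv c d ft fx u v = 0"
    then have "\<exists>Y Z W. (Y, Z, W) \<noteq> (0, 0, 0) \<and>
        Y\<^sup>2 - a * Z\<^sup>2 - W\<^sup>2 * chart_poly c d ft fx u v = 0 \<and> 2 * Y = 0 \<and> - 2 * a * Z = 0
        \<and> - 2 * W * chart_poly c d ft fx u v = 0 \<and> - (W\<^sup>2 * chart_poly_du c d ft fx u v) = 0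
        \<and> - (W\<^sup>2 * chart_poly_dv c d ft fx u v) = 0"
      by (intro exI[of _ 0] exI[of _ 1]) simp
    with V show False unfolding V_smooth_def by blast
  qed
next
  assume De: "De_smooth c d"
  show "V_smooth a c d" unfolding V_smooth_def
  proof (intro allI impI notI)
    fix ft fx u v and Y Z W :: 'a
    assume nonzero: "(Y, Z, W) \<noteq> (0, 0, 0)"
    assume sing: "Y\<^sup>2 - a * Z\<^sup>2 - W\<^sup>2 * chart_poly c d ft fx u v = 0 \<and> 2 * Y = 0
      \<and> - 2 * a * Z = 0 \<and> - 2 * W * chart_poly c d ft fx u v = 0
      \<and> - (W\<^sup>2 * chart_poly_du c d ft fx u v) = 0 \<and> - (W\<^sup>2 * chart_poly_dv c d ft fx u v) = 0"
    have "Y = 0" and "Z = 0" using sing two_nz a_nz by simp_all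
    with nonzero have "W \<noteq> 0" by simp
    with sing \<open>Y = 0\<close> \<open>Z = 0\<close>
    have "chart_poly c d ft fx u v = 0 \<and> chart_poly_du c d ft fx u v = 0
      \<and> chart_poly_dv c d ft fx u v = 0" by simp
    with De show False unfolding De_smooth_def by blast
  qed
qed

text \<open>The hypotheses on the support, the degrees and the parity of d are unused: they only
make the four chart polynomials dehomogenisations of one bihomogeneous polynomial and the
gluing W = W' t'^(d/2) well defined, which the chartwise Jacobian criterion does not see.\<close>

theorem lemma2p1:
  fixes \<phi> :: "'k::field_char_0 \<Rightarrow> 'l::alg_closed_field"
    and a :: 'k and c :: "nat \<Rightarrow> nat \<Rightarrow> 'k" and d :: nat
  assumes hom_add: "\<And>x y. \<phi> (x + y) = \<phi> x + \<phi> y"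
    and hom_mult: "\<And>x y. \<phi> (x * y) = \<phi> x * \<phi> y"
    and hom_one: "\<phi> 1 = 1"
    and a_nz: "a \<noteq> 0"
    and supp: "\<And>i j. c i j \<noteq> 0 \<Longrightarrow> i \<le> d \<and> j \<le> 4"
    and deg_x: "\<exists>i. c i 4 \<noteq> 0"
    and deg_t: "\<exists>j. c d j \<noteq> 0"
    and d_even: "even d"
  shows "V_smooth (\<phi> a) (\<lambda>i j. \<phi> (c i j)) d \<longleftrightarrow> De_smooth (\<lambda>i j. \<phi> (c i j)) d"
proof (rule V_smooth_iff_De_smooth)
  have "\<phi> 2 \<noteq> 0" using hom_nonzero[OF hom_mult hom_one, of 2] by simp
  then show "(2::'l) \<noteq> 0" by (simp add: hom_two[OF hom_add hom_one])
  show "\<phi> a \<noteq> 0" using hom_nonzero[OF hom_mult hom_one a_nz] .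
qed

end
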